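(* Let $(s,\xi)$ be a Nash equilibrium of the coordination mechanism described in the context in a game with unit activation costs. Then for every job $j$, either $\xi_j=0$ or every slot in $[r_j,d_j)\setminus\{s_j\}$ is unoccupied (has no job assigned to it under $s$).
   Context: Unit activation costs means $c(0)=0$ and $c(l)=1$ for every integer $l>0$. A game consists of the cost function $c$, slots $t=1,\dots,T$, and a set of jobs, each job $j$ having integer release time $r_j$ and deadline $d_j$ with $0<r_j<d_j<T$. In the coordination mechanism, each job $j$ chooses a pair $(s_j,\xi_j)$ with $s_j$ an integer in $[r_j,d_j)$ and payment $\xi_j\ge0$. The load of slot $t$ is $l_t(s)=|\{j:s_j=t\}|$. Slot $t$ is opened iff $\sum_{j:s_j=t}\xi_j\ge c(l_t(s))$; a job whose slot is not opened has infinite cost, otherwise its cost is $\xi_j$. A profile $(s,\xi)$ is a Nash equilibrium if for every job $j$: (i) $\sum_{j':s_{j'}=s_j}\xi_{j'}\ge c(l_{s_j}(s))$; (ii) for every $t\in[r_j,d_j)\setminus\{s_j\}$, $\xi_j\le\max\{0,\,c(l_t(s)+1)-\sum_{j':s_{j'}=t}\xi_{j'}\}$; (iii) $\xi_j\le\max\{0,\,c(l_{s_j}(s))-\sum_{j':s_{j'}=s_j,\,j'\ne j}\xi_{j'}\}$. *)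

theory Defs
  imports Complex_Main
begin

definition unit_cost :: "nat \<Rightarrow> real" where
  "unit_cost l = (if l = 0 then 0 else 1)"

definition valid_game :: "'j set \<Rightarrow> nat \<Rightarrow> ('j \<Rightarrow> nat) \<Rightarrow> ('j \<Rightarrow> nat) \<Rightarrow> bool" where
  "valid_game J T r d \<longleftrightarrow> finite J \<and> (\<forall>j\<in>J. 0 < r j \<and> r j < d j \<and> d j < T)"

definition load :: "'j set \<Rightarrow> ('j \<Rightarrow> nat) \<Rightarrow> nat \<Rightarrow> nat" where
  "load J s t = card {j\<in>J. s j = t}"

definition paid :: "'j set \<Rightarrow> ('j \<Rightarrow> nat) \<Rightarrow> ('j \<Rightarrow> real) \<Rightarrow> nat \<Rightarrow> real" where
  "paid J s \<xi> t = (\<Sum>j'\<in>{j'\<in>J. s j' = t}. \<xi> j')"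

definition profile :: "'j set \<Rightarrow> ('j \<Rightarrow> nat) \<Rightarrow> ('j \<Rightarrow> nat) \<Rightarrow> ('j \<Rightarrow> nat) \<Rightarrow> ('j \<Rightarrow> real) \<Rightarrow> bool" where
  "profile J r d s \<xi> \<longleftrightarrow> (\<forall>j\<in>J. r j \<le> s j \<and> s j < d j \<and> 0 \<le> \<xi> j)"

definition nash_eq :: "(nat \<Rightarrow> real) \<Rightarrow> 'j set \<Rightarrow> ('j \<Rightarrow> nat) \<Rightarrow> ('j \<Rightarrow> nat) \<Rightarrow> ('j \<Rightarrow> nat) \<Rightarrow> ('j \<Rightarrow> real) \<Rightarrow> bool" where
  "nash_eq c J r d s \<xi> \<longleftrightarrow> profile J r d s \<xi> \<and>
     (\<forall>j\<in>J.
        paid J s \<xi> (s j) \<ge> c (load J s (s j)) \<and>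
        (\<forall>t. r j \<le> t \<and> t < d j \<and> t \<noteq> s j \<longrightarrow>
            \<xi> j \<le> max 0 (c (load J s t + 1) - paid J s \<xi> t)) \<and>
        \<xi> j \<le> max 0 (c (load J s (s j)) - (\<Sum>j'\<in>{j'\<in>J. s j' = s j \<and> j' \<noteq> j}. \<xi> j')))"

end

theory Submission
  imports Defs
begin

text \<open>A job that pays something could move, for free, to any other occupied slot of its
  window: that slot is already paid for, and with unit costs one more job does not raise
  its cost.\<close>

lemma load_nonzero_imp_occupied:
  assumes "load J s t \<noteq> 0"
  obtains k where "k \<in> J" "s k = t"
  using assms unfolding load_def by (metis (mono_tags, lifting) card.empty empty_Collect_eq)

lemma nash_eq_cost_le_paid:
  assumes "nash_eq c J r d s \<xi>" and "load J s t \<noteq> 0"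
  shows "c (load J s t) \<le> paid J s \<xi> t"
proof -
  obtain k where "k \<in> J" "s k = t"
    using assms(2) by (rule load_nonzero_imp_occupied)
  then show ?thesis
    using assms(1) unfolding nash_eq_def by metis
qed

lemma nash_eq_payment_zero_if_cheap_deviation:
  assumes eq: "nash_eq c J r d s \<xi>" and "j \<in> J"
    and window: "r j \<le> t" "t < d j" "t \<noteq> s j"
    and occupied: "load J s t \<noteq> 0"
    and no_extra_cost: "c (load J s t + 1) \<le> c (load J s t)"
  shows "\<xi> j = 0"
proof -
  have "c (load J s t + 1) \<le> paid J s \<xi> t"
    using no_extra_cost nash_eq_cost_le_paid[OF eq occupied] by linarith
  moreover have "\<xi> j \<le> max 0 (c (load J s t + 1) - paid J s \<xi> t)"
    using eq \<open>j \<in> J\<close> window unfolding nash_eq_def by blast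
  moreover have "0 \<le> \<xi> j"
    using eq \<open>j \<in> J\<close> unfolding nash_eq_def profile_def by blast
  ultimately show ?thesis by linarith
qed

lemma unit_cost_Suc_le:
  assumes "l \<noteq> 0"
  shows "unit_cost (l + 1) \<le> unit_cost l"
  using assms by (simp add: unit_cost_def)

theorem lemma5:
  fixes J :: "'j set" and T :: nat and r d s :: "'j \<Rightarrow> nat" and \<xi> :: "'j \<Rightarrow> real"
  assumes "valid_game J T r d"
    and "nash_eq unit_cost J r d s \<xi>"
    and "j \<in> J"
  shows "\<xi> j = 0 \<or> (\<forall>t. r j \<le> t \<and> t < d j \<and> t \<noteq> s j \<longrightarrow> load J s t = 0)"
  using nash_eq_payment_zero_if_cheap_deviation[OF assms(2,3) _ _ _ _ unit_cost_Suc_le]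
  by blast

end
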